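(* Let $x_1,\ldots,x_J \in \mathbb{R}^d$ be given, let $\rho \ge 0$, $\widehat\mu \in \mathbb{R}^d$ and $\widehat\Sigma \in \mathbb{S}_+^d$. Define $\Theta(\{x_j\}) = \{\theta \in \mathbb{R}^d : x_j^\top \theta \ge 0 \ \forall j \in [J]\}$, and let $\mathbb{B}$ be the set of all probability measures $\mathbb{Q}$ on $\mathbb{R}^d$ for which there exists $(\mu,\Sigma) \in \mathbb{R}^d \times \mathbb{S}_+^d$ with $\mathbb{G}((\mu,\Sigma),(\widehat\mu,\widehat\Sigma)) \le \rho$ such that the random vector $\tilde\theta \sim \mathbb{Q}$ has mean $\mu$ and covariance matrix $\Sigma$. Let $U^\star$ be the optimal value of the semidefinite program $$ U^\star = \left\{\begin{array}{cl} \inf & z_0 + \gamma(\rho^2 - \|\widehat\mu\|_2^2 - \mathrm{Tr}(\widehat\Sigma)) + q + \mathrm{Tr}(Q)\\ \text{s.t.} & \gamma \in \mathbb{R}_+,\ z_0 \in \mathbb{R},\ z \in \mathbb{R}^d,\ Z \in \mathbb{S}_+^d,\ q \in \mathbb{R}_+,\ Q \in \mathbb{S}_+^d,\ \lambda \in \mathbb{R}_+^J,\\ & \begin{bmatrix} \gamma I - Z & \gamma\widehat\Sigma^{1/2} \\ \gamma \widehat\Sigma^{1/2} & Q\end{bmatrix} \succeq 0,\quad \begin{bmatrix} \gamma I - Z & \gamma\widehat\mu + z \\ \gamma\widehat\mu^\top + z^\top & q\end{bmatrix} \succeq 0,\\ & \begin{bmatrix} Z & z \\ z^\top & z_0\end{bmatrix}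 \succeq 0,\quad \begin{bmatrix} Z & z \\ z^\top & z_0 - 1\end{bmatrix} \succeq \sum_{j\in[J]} \lambda_j \begin{bmatrix} 0 & \tfrac12 x_j \\ \tfrac12 x_j^\top & 0\end{bmatrix}. \end{array}\right. $$ Then $\sup_{\mathbb{Q}\in\mathbb{B}} \mathbb{Q}(\tilde\theta \in \Theta(\{x_j\})) \le U^\star$.
   Context: $\mathbb{S}^d$ denotes the symmetric $d\times d$ matrices, $\mathbb{S}_+^d$ the positive semidefinite ones, $[J]=\{1,\ldots,J\}$, $I$ the identity matrix. The Gelbrich distance between $(\mu_1,\Sigma_1),(\mu_2,\Sigma_2) \in \mathbb{R}^d\times\mathbb{S}_+^d$ is $$\mathbb{G}((\mu_1,\Sigma_1),(\mu_2,\Sigma_2)) = \sqrt{\|\mu_1-\mu_2\|_2^2 + \mathrm{Tr}\big(\Sigma_1+\Sigma_2 - 2(\Sigma_2^{1/2}\Sigma_1\Sigma_2^{1/2})^{1/2}\big)}.$$ *)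

theory Defs
  imports "HOL-Analysis.Analysis" "HOL-Probability.Probability" "HOL-Library.Extended_Real"
begin

definition psd :: "real^'n^'n \<Rightarrow> bool" where
  "psd M \<longleftrightarrow> transpose M = M \<and> (\<forall>v. v \<bullet> (M *v v) \<ge> 0)"

definition loewner_ge :: "real^'n^'n \<Rightarrow> real^'n^'n \<Rightarrow> bool" where
  "loewner_ge M N \<longleftrightarrow> psd (M - N)"

definition msqrt :: "real^'n^'n \<Rightarrow> real^'n^'n" where
  "msqrt A = (THE S. psd S \<and> S ** S = A)"

definition gelbrich :: "real^'n \<Rightarrow> real^'n^'n \<Rightarrow> real^'n \<Rightarrow> real^'n^'n \<Rightarrow> real" where
  "gelbrich \<mu>1 \<Sigma>1 \<mu>2 \<Sigma>2 =
     sqrt ((norm (\<mu>1 - \<mu>2))\<^sup>2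
           + trace (\<Sigma>1 + \<Sigma>2 - 2 *\<^sub>R msqrt (msqrt \<Sigma>2 ** \<Sigma>1 ** msqrt \<Sigma>2)))"

definition blockmat ::
  "real^'a^'a \<Rightarrow> real^'b^'a \<Rightarrow> real^'a^'b \<Rightarrow> real^'b^'b \<Rightarrow> real^('a + 'b)^('a + 'b)" where
  "blockmat A B C D = (\<chi> i j. case i of
       Inl r \<Rightarrow> (case j of Inl s \<Rightarrow> A $ r $ s | Inr s \<Rightarrow> B $ r $ s)
     | Inr r \<Rightarrow> (case j of Inl s \<Rightarrow> C $ r $ s | Inr s \<Rightarrow> D $ r $ s))"

definition colm :: "real^'n \<Rightarrow> real^unit^'n" where
  "colm v = (\<chi> i j. v $ i)"

definition rowm :: "real^'n \<Rightarrow> real^'n^unit" where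
  "rowm v = (\<chi> i j. v $ j)"

definition scalm :: "real \<Rightarrow> real^unit^unit" where
  "scalm c = (\<chi> i j. c)"

definition has_mean_cov :: "(real^'n) measure \<Rightarrow> real^'n \<Rightarrow> real^'n^'n \<Rightarrow> bool" where
  "has_mean_cov Q \<mu> \<Sigma> \<longleftrightarrow>
     (\<forall>i. integrable Q (\<lambda>\<theta>. \<theta> $ i)) \<and>
     (\<forall>i k. integrable Q (\<lambda>\<theta>. \<theta> $ i * \<theta> $ k)) \<and>
     (\<forall>i. (\<integral>\<theta>. \<theta> $ i \<partial>Q) = \<mu> $ i) \<and>
     (\<forall>i k. (\<integral>\<theta>. (\<theta> $ i - \<mu> $ i) * (\<theta> $ k - \<mu> $ k) \<partial>Q) = \<Sigma> $ i $ k)"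

definition gelbrich_ball :: "real \<Rightarrow> real^'n \<Rightarrow> real^'n^'n \<Rightarrow> (real^'n) measure set" where
  "gelbrich_ball \<rho> \<mu>h \<Sigma>h = {Q. prob_space Q \<and> sets Q = sets borel \<and>
      (\<exists>\<mu> \<Sigma>. psd \<Sigma> \<and> gelbrich \<mu> \<Sigma> \<mu>h \<Sigma>h \<le> \<rho> \<and> has_mean_cov Q \<mu> \<Sigma>)}"

definition Theta :: "nat \<Rightarrow> (nat \<Rightarrow> real^'n) \<Rightarrow> (real^'n) set" where
  "Theta J x = {\<theta>. \<forall>j\<in>{1..J}. x j \<bullet> \<theta> \<ge> 0}"

definition sdp_feasible ::
  "nat \<Rightarrow> (nat \<Rightarrow> real^'n) \<Rightarrow> real^'n \<Rightarrow> real^'n^'n \<Rightarrow>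
   real \<Rightarrow> real \<Rightarrow> real^'n \<Rightarrow> real^'n^'n \<Rightarrow> real \<Rightarrow> real^'n^'n \<Rightarrow> (nat \<Rightarrow> real) \<Rightarrow> bool" where
  "sdp_feasible J x \<mu>h \<Sigma>h \<gamma> z0 z Z q Qm lam \<longleftrightarrow>
     \<gamma> \<ge> 0 \<and> psd Z \<and> q \<ge> 0 \<and> psd Qm \<and> (\<forall>j\<in>{1..J}. lam j \<ge> 0) \<and>
     psd (blockmat (\<gamma> *\<^sub>R mat 1 - Z) (\<gamma> *\<^sub>R msqrt \<Sigma>h) (\<gamma> *\<^sub>R msqrt \<Sigma>h) Qm) \<and>
     psd (blockmat (\<gamma> *\<^sub>R mat 1 - Z) (colm (\<gamma> *\<^sub>R \<mu>h + z)) (rowm (\<gamma> *\<^sub>R \<mu>h + z)) (scalm q)) \<and>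
     psd (blockmat Z (colm z) (rowm z) (scalm z0)) \<and>
     loewner_ge (blockmat Z (colm z) (rowm z) (scalm (z0 - 1)))
       (\<Sum>j\<in>{1..J}. lam j *\<^sub>R blockmat 0 (colm ((1/2) *\<^sub>R x j)) (rowm ((1/2) *\<^sub>R x j)) 0)"

definition sdp_objective :: "real \<Rightarrow> real^'n \<Rightarrow> real^'n^'n \<Rightarrow>
   real \<Rightarrow> real \<Rightarrow> real \<Rightarrow> real^'n^'n \<Rightarrow> real" where
  "sdp_objective \<rho> \<mu>h \<Sigma>h \<gamma> z0 q Qm =
     z0 + \<gamma> * (\<rho>\<^sup>2 - (norm \<mu>h)\<^sup>2 - trace \<Sigma>h) + q + trace Qm"

text \<open>Optimal value U* (infimum in the extended reals; +infinity if infeasible).\<close>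
definition U_star :: "nat \<Rightarrow> (nat \<Rightarrow> real^'n) \<Rightarrow> real \<Rightarrow> real^'n \<Rightarrow> real^'n^'n \<Rightarrow> ereal" where
  "U_star J x \<rho> \<mu>h \<Sigma>h =
     (INF p \<in> {(\<gamma>, z0, z, Z, q, Qm, lam). sdp_feasible J x \<mu>h \<Sigma>h \<gamma> z0 z Z q Qm lam}.
        ereal (case p of (\<gamma>, z0, z, Z, q, Qm, lam) \<Rightarrow> sdp_objective \<rho> \<mu>h \<Sigma>h \<gamma> z0 q Qm))"

end

theory Submission
  imports Defs
begin

text \<open>Fix \<open>Q\<close> in the ball, with mean \<open>\<mu>\<close> and covariance \<open>\<Sigma>\<close>, and a feasible point.
  The last two constraints say that \<open>f \<theta> = \<theta>\<^sup>T Z \<theta> + 2 z\<^sup>T \<theta> + z0\<close> is nonnegative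
  everywhere and at least 1 on \<open>Theta J x\<close>, so
  \<open>Q(Theta J x) \<le> E f = tr(Z \<Sigma>) + \<mu>\<^sup>T Z \<mu> + 2 z\<^sup>T \<mu> + z0\<close>.
  Testing the second constraint with \<open>(\<mu>, -1)\<close> bounds \<open>\<mu>\<^sup>T Z \<mu> + 2 z\<^sup>T \<mu>\<close>, and the first one
  gives \<open>2 \<gamma> tr T \<le> tr((\<gamma> I - Z) \<Sigma>) + tr Qm\<close> for \<open>T = (S \<Sigma> S)^(1/2)\<close>, \<open>S = \<Sigma>h^(1/2)\<close>.
  Adding \<open>\<gamma>\<close> times the Gelbrich constraint
  \<open>\<parallel>\<mu> - \<mu>h\<parallel>\<^sup>2 + tr \<Sigma> + tr \<Sigma>h - 2 tr T \<le> \<rho>\<^sup>2\<close> yields exactly the objective.\<close>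

lemma inner_matrix_symmetric:
  fixes A :: "real^'n^'n"
  assumes "transpose A = A"
  shows "x \<bullet> (A *v y) = (A *v x) \<bullet> y"
proof -
  have "x \<bullet> (A *v y) = (x v* A) \<bullet> y" by (simp add: dot_lmul_matrix)
  also have "x v* A = transpose A *v x"
    by (metis transpose_transpose vector_transpose_matrix)
  finally show ?thesis using assms by simp
qed

lemma psd_symmetric: "psd A \<Longrightarrow> transpose A = A"
  by (simp add: psd_def)

lemma psd_nonneg: "psd A \<Longrightarrow> 0 \<le> v \<bullet> (A *v v)"
  by (simp add: psd_def)

lemma psd_congruence:
  fixes \<Sigma> S :: "real^'n^'n"
  assumes \<Sigma>: "psd \<Sigma>" and S: "transpose S = S"
  shows "psd (S ** \<Sigma> ** S)"
proof -
  have "v \<bullet> ((S ** \<Sigma> ** S) *v v) = (S *v v) \<bullet> (\<Sigma> *v (S *v v))" for v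
    using inner_matrix_symmetric[OF S, of v "\<Sigma> *v (S *v v)"]
    by (simp add: matrix_vector_mul_assoc matrix_mul_assoc)
  then show ?thesis
    using \<Sigma> S by (simp add: psd_def matrix_transpose_mul matrix_mul_assoc)
qed

lemma matrix_vector_mult_sum_scaleR:
  fixes A :: "real^'n^'m"
  shows "A *v (\<Sum>b\<in>B. f b *\<^sub>R g b) = (\<Sum>b\<in>B. f b *\<^sub>R (A *v g b))"
  by (simp add: linear_sum[OF matrix_vector_mul_linear] o_def matrix_vector_mult_scaleR)

lemma matrix_sum_vector_mult: "(\<Sum>j\<in>S. F j) *v v = (\<Sum>j\<in>S. F j *v v)"
  by (induction S rule: infinite_finite_induct) (simp_all add: matrix_vector_mult_add_rdistrib)

lemma trace_scaleR: "trace (c *\<^sub>R A) = c * trace (A :: real^'n^'n)"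
  by (simp add: trace_def sum_distrib_left)

section \<open>The spectral theorem for symmetric matrices\<close>

lemma linear_coeff_zero_if_quadratic_nonpos:
  fixes a c :: real
  assumes "\<And>t. 2 * t * a + t\<^sup>2 * c \<le> 0"
  shows "a = 0"
proof -
  define k where "k = \<bar>c\<bar> + 1"
  have k: "k > 0" "2 * k + c > 0" by (auto simp: k_def)
  have "a\<^sup>2 * (2 * k + c) = k\<^sup>2 * (2 * (a / k) * a + (a / k)\<^sup>2 * c)"
    using k by (simp add: field_simps power2_eq_square)
  also have "\<dots> \<le> 0" using assms[of "a / k"] by (simp add: mult_nonneg_nonpos)
  finally have "a\<^sup>2 \<le> 0" using k(2) by (simp add: mult_le_0_iff)
  then show ?thesis by simp
qed

definition orthonormal :: "(real^'n) set \<Rightarrow> bool" where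
  "orthonormal B \<longleftrightarrow> finite B \<and> (\<forall>b\<in>B. norm b = 1) \<and> pairwise orthogonal B"

definition orthonormal_basis :: "(real^'n) set \<Rightarrow> bool" where
  "orthonormal_basis B \<longleftrightarrow> orthonormal B \<and> card B = CARD('n)"

text \<open>On unit vectors the eigenvalue is the Rayleigh quotient, so it need not be named.\<close>
definition eigenvectors :: "real^'n^'n \<Rightarrow> (real^'n) set \<Rightarrow> bool" where
  "eigenvectors A B \<longleftrightarrow> (\<forall>b\<in>B. A *v b = (b \<bullet> (A *v b)) *\<^sub>R b)"

lemma rayleigh_max_exists:
  fixes A :: "real^'n^'n"
  assumes V: "subspace V" and x: "x \<in> V" "x \<noteq> 0"
  obtains e where "e \<in> V" "norm e = 1" "\<And>v. v \<in> V \<Longrightarrow> v \<bullet> (A *v v) \<le> (e \<bullet> (A *v e)) * (v \<bullet> v)"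
proof -
  define K where "K = V \<inter> sphere 0 1"
  have "compact K"
    unfolding K_def by (intro closed_Int_compact compact_sphere closed_subspace V)
  moreover have "x /\<^sub>R norm x \<in> K"
    using x V by (simp add: K_def subspace_scale)
  moreover have "continuous_on K (\<lambda>v. v \<bullet> (A *v v))"
    by (intro continuous_intros linear_continuous_on matrix_vector_mul_bounded_linear)
  ultimately obtain e where eK: "e \<in> K" and emax: "\<And>y. y \<in> K \<Longrightarrow> y \<bullet> (A *v y) \<le> e \<bullet> (A *v e)"
    using continuous_attains_sup[of K] by blast
  have "v \<bullet> (A *v v) \<le> (e \<bullet> (A *v e)) * (v \<bullet> v)" if "v \<in> V" for v
  proof (cases "v = 0")
    case False
    have "v /\<^sub>R norm v \<in> K" using that False V by (simp add: K_def subspace_scale)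
    then have "(v /\<^sub>R norm v) \<bullet> (A *v (v /\<^sub>R norm v)) \<le> e \<bullet> (A *v e)"
      by (rule emax)
    then have "(v \<bullet> (A *v v)) / (norm v)\<^sup>2 \<le> e \<bullet> (A *v e)"
      by (simp add: matrix_vector_mult_scaleR power2_eq_square divide_inverse ac_simps)
    then show ?thesis using False by (simp add: dot_square_norm divide_le_eq ac_simps)
  qed simp
  moreover have "e \<in> V" "norm e = 1" using eK by (auto simp: K_def)
  ultimately show ?thesis using that by blast
qed

lemma rayleigh_max_eigenvector:
  fixes A :: "real^'n^'n"
  assumes A: "transpose A = A" and V: "subspace V" and inv: "\<And>v. v \<in> V \<Longrightarrow> A *v v \<in> V"
    and e: "e \<in> V" "e \<bullet> e = 1"
    and max: "\<And>v. v \<in> V \<Longrightarrow> v \<bullet> (A *v v) \<le> (e \<bullet> (A *v e)) * (v \<bullet> v)"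
  shows "A *v e = (e \<bullet> (A *v e)) *\<^sub>R e"
proof -
  define l where "l = e \<bullet> (A *v e)"
  define r where "r = A *v e - l *\<^sub>R e"
  have rV: "r \<in> V" using inv[OF e(1)] e(1) V by (simp add: r_def subspace_diff subspace_scale)
  \<comment> \<open>first-order condition of the maximum at \<open>e\<close> in direction \<open>r\<close>\<close>
  have "2 * t * (r \<bullet> r) + t\<^sup>2 * (r \<bullet> (A *v r) - l * (r \<bullet> r)) \<le> 0" for t
  proof -
    have "e + t *\<^sub>R r \<in> V" using e(1) rV V by (simp add: subspace_add subspace_scale)
    then have "(e + t *\<^sub>R r) \<bullet> (A *v (e + t *\<^sub>R r)) \<le> l * ((e + t *\<^sub>R r) \<bullet> (e + t *\<^sub>R r))"
      using max by (simp add: l_def)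
    moreover have "e \<bullet> (A *v r) = r \<bullet> (A *v e)"
      using inner_matrix_symmetric[OF A, of e r] by (simp add: inner_commute)
    ultimately show ?thesis
      using e(2) by (simp add: r_def l_def matrix_vector_right_distrib matrix_vector_mult_scaleR
          inner_add_left inner_add_right inner_diff_left inner_diff_right inner_commute
          power2_eq_square algebra_simps)
  qed
  then have "r \<bullet> r = 0" by (rule linear_coeff_zero_if_quadratic_nonpos)
  then show ?thesis by (simp add: r_def l_def)
qed

lemma orthonormal_eigenvectors_extend:
  fixes A :: "real^'n^'n"
  assumes A: "transpose A = A" and B: "orthonormal B" "eigenvectors A B"
    and card: "card B < CARD('n)"
  obtains e where "e \<notin> B" "orthonormal (insert e B)" "eigenvectors A (insert e B)"
proof -
  define V where "V = {v. \<forall>b\<in>B. orthogonal b v}"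
  have V: "subspace V" by (simp add: V_def subspace_orthogonal_to_vectors)
  have inv: "A *v v \<in> V" if "v \<in> V" for v
  proof -
    have "b \<bullet> (A *v v) = (b \<bullet> (A *v b)) * (b \<bullet> v)" if "b \<in> B" for b
      using B(2) that inner_matrix_symmetric[OF A, of b v]
      by (metis eigenvectors_def inner_scaleR_left)
    then show ?thesis using \<open>v \<in> V\<close> by (simp add: V_def orthogonal_def)
  qed
  have "dim B < DIM(real^'n)"
    using B(1) card dim_le_card'[of B] by (simp add: orthonormal_def DIM_cart)
  then obtain x where "x \<noteq> 0" "\<And>y. y \<in> span B \<Longrightarrow> orthogonal x y"
    using orthogonal_to_subspace_exists by blast
  then have "x \<in> V" "x \<noteq> 0"
    by (auto simp: V_def orthogonal_commute span_base)
  then obtain e where e: "e \<in> V" "norm e = 1"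
    and max: "\<And>v. v \<in> V \<Longrightarrow> v \<bullet> (A *v v) \<le> (e \<bullet> (A *v e)) * (v \<bullet> v)"
    using rayleigh_max_exists[where A = A, OF V] by blast
  have ee: "e \<bullet> e = 1" using e(2) by (simp add: dot_square_norm)
  have "A *v e = (e \<bullet> (A *v e)) *\<^sub>R e"
    using ee by (intro rayleigh_max_eigenvector[OF A V inv e(1)] max) auto
  moreover have "e \<notin> B" using e ee by (auto simp: V_def orthogonal_def)
  moreover have "pairwise orthogonal (insert e B)"
    using B(1) e(1) by (intro pairwise_orthogonal_insert)
      (auto simp: orthonormal_def V_def orthogonal_commute)
  ultimately show ?thesis
    using that B e(2) by (auto simp: orthonormal_def eigenvectors_def)
qed

theorem symmetric_orthonormal_eigenbasis:
  fixes A :: "real^'n^'n"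
  assumes A: "transpose A = A"
  obtains B where "orthonormal_basis B" "eigenvectors A B"
proof -
  have "\<exists>B. orthonormal B \<and> eigenvectors A B \<and> card B = k" if "k \<le> CARD('n)" for k
    using that
  proof (induction k)
    case 0
    have "orthonormal {}" "eigenvectors A {}" by (simp_all add: orthonormal_def eigenvectors_def)
    then show ?case by force
  next
    case (Suc k)
    then obtain B where B: "orthonormal B" "eigenvectors A B" "card B = k" by auto
    then obtain e where "e \<notin> B" "orthonormal (insert e B)" "eigenvectors A (insert e B)"
      using orthonormal_eigenvectors_extend[OF A B(1,2)] Suc.prems by auto
    moreover have "finite B" using B(1) by (simp add: orthonormal_def)
    ultimately show ?case using B(3) by (intro exI[of _ "insert e B"]) auto
  qed
  then show ?thesis using that by (auto simp: orthonormal_basis_def)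
qed

lemma orthonormal_inner:
  assumes "orthonormal B" "b \<in> B" "c \<in> B"
  shows "b \<bullet> c = (if b = c then 1 else 0)"
  using assms by (auto simp: orthonormal_def pairwise_def orthogonal_def dot_square_norm)

lemma orthonormal_sum_inner:
  assumes B: "orthonormal B" and c: "c \<in> B"
  shows "(\<Sum>b\<in>B. f b * (c \<bullet> b)) = f c"
proof -
  have "(\<Sum>b\<in>B. f b * (c \<bullet> b)) = (\<Sum>b\<in>B. if b = c then f c else 0)"
    using orthonormal_inner[OF B c] by (intro sum.cong) auto
  also have "\<dots> = f c" using B c by (simp add: orthonormal_def)
  finally show ?thesis .
qed

lemma orthonormal_basis_expansion:
  fixes v :: "real^'n"
  assumes B: "orthonormal_basis B"
  shows "v = (\<Sum>b\<in>B. (b \<bullet> v) *\<^sub>R b)"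
proof (rule ccontr)
  define w where "w = v - (\<Sum>b\<in>B. (b \<bullet> v) *\<^sub>R b)"
  assume "v \<noteq> (\<Sum>b\<in>B. (b \<bullet> v) *\<^sub>R b)"
  then have "w \<noteq> 0" by (simp add: w_def)
  have ON: "orthonormal B" and card: "card B = CARD('n)"
    using B by (auto simp: orthonormal_basis_def)
  have cw: "c \<bullet> w = 0" if "c \<in> B" for c
    using orthonormal_sum_inner[OF ON that, of "\<lambda>b. b \<bullet> v"]
    by (simp add: w_def inner_diff_right inner_sum_right)
  then have "w \<notin> B" using \<open>w \<noteq> 0\<close> by (metis inner_eq_zero_iff)
  have "pairwise orthogonal (insert w B)"
    using ON cw by (intro pairwise_orthogonal_insert)
      (auto simp: orthonormal_def orthogonal_def inner_commute)
  moreover have "0 \<notin> insert w B" using \<open>w \<noteq> 0\<close> ON by (auto simp: orthonormal_def)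
  ultimately have "card (insert w B) \<le> DIM(real^'n)"
    by (intro independent_card_le pairwise_orthogonal_independent)
  moreover have "card (insert w B) = Suc CARD('n)"
    using ON card \<open>w \<notin> B\<close> by (simp add: orthonormal_def)
  ultimately show False by (simp add: DIM_cart)
qed

lemma orthonormal_basis_parseval:
  fixes u v :: "real^'n"
  assumes "orthonormal_basis B"
  shows "u \<bullet> v = (\<Sum>b\<in>B. (b \<bullet> u) * (b \<bullet> v))"
  by (subst orthonormal_basis_expansion[OF assms, of u]) (simp add: inner_sum_left)

lemma orthonormal_basis_trace:
  fixes M :: "real^'n^'n"
  assumes B: "orthonormal_basis B"
  shows "trace M = (\<Sum>b\<in>B. b \<bullet> (M *v b))"
proof -
  have delta: "(\<Sum>b\<in>B. b$i * b$j) = (if i = j then 1 else 0)" for i j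
  proof -
    have "(\<Sum>b\<in>B. b$i * b$j) = axis i (1::real) \<bullet> axis j 1"
      using orthonormal_basis_parseval[OF B, of "axis i 1" "axis j 1"] by (simp add: inner_axis)
    then show ?thesis by (simp add: inner_axis_axis)
  qed
  have "(\<Sum>b\<in>B. b \<bullet> (M *v b)) = (\<Sum>i\<in>UNIV. \<Sum>j\<in>UNIV. M$i$j * (\<Sum>b\<in>B. b$i * b$j))"
    by (simp add: inner_vec_def matrix_vector_mult_def sum_distrib_left sum.swap[of _ B] ac_simps)
  also have "\<dots> = trace M" by (simp add: delta trace_def if_distrib cong: if_cong)
  finally show ?thesis by simp
qed

lemma eigenbasis_quadratic_form:
  fixes M :: "real^'n^'n"
  assumes B: "orthonormal_basis B" and E: "eigenvectors M B"
  shows "u \<bullet> (M *v u) = (\<Sum>c\<in>B. (c \<bullet> (M *v c)) * (c \<bullet> u)\<^sup>2)"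
proof -
  have "M *v u = (\<Sum>c\<in>B. (c \<bullet> u) *\<^sub>R (M *v c))"
    by (subst orthonormal_basis_expansion[OF B, of u]) (rule matrix_vector_mult_sum_scaleR)
  also have "\<dots> = (\<Sum>c\<in>B. ((c \<bullet> u) * (c \<bullet> (M *v c))) *\<^sub>R c)"
    using E by (intro sum.cong refl) (metis eigenvectors_def scaleR_scaleR)
  finally show ?thesis
    by (simp add: inner_sum_right inner_commute power2_eq_square ac_simps)
qed

lemma eigenbasis_trace_mult:
  fixes M \<Sigma> :: "real^'n^'n"
  assumes B: "orthonormal_basis B" and E: "eigenvectors M B" and M: "transpose M = M"
  shows "trace (M ** \<Sigma>) = (\<Sum>c\<in>B. (c \<bullet> (M *v c)) * (c \<bullet> (\<Sigma> *v c)))"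
proof -
  have "trace (M ** \<Sigma>) = (\<Sum>c\<in>B. (M *v c) \<bullet> (\<Sigma> *v c))"
    by (simp add: orthonormal_basis_trace[OF B] matrix_vector_mul_assoc[symmetric]
        inner_matrix_symmetric[OF M])
  also have "\<dots> = (\<Sum>c\<in>B. (c \<bullet> (M *v c)) * (c \<bullet> (\<Sigma> *v c)))"
    using E by (intro sum.cong refl) (metis eigenvectors_def inner_scaleR_left)
  finally show ?thesis .
qed

section \<open>The positive semidefinite square root\<close>

lemma psd_sqrt_on_eigenvector:
  fixes S :: "real^'n^'n"
  assumes S: "psd S" and b: "S *v (S *v b) = l *\<^sub>R b" and l: "l \<ge> 0"
  shows "S *v b = sqrt l *\<^sub>R b"
proof (cases "l = 0")
  case True
  have "(S *v b) \<bullet> (S *v b) = b \<bullet> (S *v (S *v b))"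
    using inner_matrix_symmetric[OF psd_symmetric[OF S], of b "S *v b"] by simp
  then show ?thesis using b True by simp
next
  case False
  define w where "w = S *v b - sqrt l *\<^sub>R b"
  have "S *v w + sqrt l *\<^sub>R w = 0"
    using b l
    by (simp add: w_def matrix_vector_mult_diff_distrib matrix_vector_mult_scaleR algebra_simps)
  then have "w \<bullet> (S *v w) + sqrt l * (w \<bullet> w) = 0"
    by (metis inner_add_right inner_scaleR_right inner_zero_right)
  moreover have "w \<bullet> (S *v w) \<ge> 0" using S by (rule psd_nonneg)
  ultimately have "sqrt l * (w \<bullet> w) \<le> 0" by linarith
  then have "w = 0" using False l by (simp add: mult_le_0_iff flip: power2_norm_eq_inner)
  then show ?thesis by (simp add: w_def)
qed

lemma psd_sqrt_exists:
  fixes A :: "real^'n^'n"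
  assumes A: "psd A"
  obtains S where "psd S" "S ** S = A"
proof -
  obtain B where B: "orthonormal_basis B" and E: "eigenvectors A B"
    using symmetric_orthonormal_eigenbasis[OF psd_symmetric[OF A]] by blast
  have ON: "orthonormal B" using B by (simp add: orthonormal_basis_def)
  define l where "l b = b \<bullet> (A *v b)" for b
  have l: "l b \<ge> 0" for b using A by (simp add: l_def psd_nonneg)
  define S :: "real^'n^'n" where "S = (\<chi> i j. \<Sum>b\<in>B. sqrt (l b) * b$i * b$j)"
  have Sv: "S *v v = (\<Sum>b\<in>B. (sqrt (l b) * (b \<bullet> v)) *\<^sub>R b)" for v
    by (simp add: vec_eq_iff S_def matrix_vector_mult_def inner_vec_def sum_component
        sum_distrib_left sum_distrib_right sum.swap[of _ B] ac_simps)
  have "psd S"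
  proof -
    have "v \<bullet> (S *v v) = (\<Sum>b\<in>B. sqrt (l b) * (b \<bullet> v)\<^sup>2)" for v
      by (simp add: Sv inner_sum_right inner_commute power2_eq_square ac_simps)
    moreover have "transpose S = S" by (simp add: transpose_def vec_eq_iff S_def ac_simps)
    ultimately show ?thesis using l by (simp add: psd_def sum_nonneg)
  qed
  moreover have "(S ** S) *v v = A *v v" for v
  proof -
    have "c \<bullet> (S *v v) = sqrt (l c) * (c \<bullet> v)" if "c \<in> B" for c
      using orthonormal_sum_inner[OF ON that, of "\<lambda>b. sqrt (l b) * (b \<bullet> v)"]
      by (simp add: Sv inner_sum_right)
    then have "(S ** S) *v v = (\<Sum>b\<in>B. (l b * (b \<bullet> v)) *\<^sub>R b)"
      using l by (simp add: matrix_vector_mul_assoc[symmetric] Sv[of "S *v v"] real_sqrt_mult_self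
          mult.assoc[symmetric] cong: sum.cong)
    also have "\<dots> = (\<Sum>b\<in>B. (b \<bullet> v) *\<^sub>R (A *v b))"
      using E by (intro sum.cong refl) (metis eigenvectors_def l_def mult.commute scaleR_scaleR)
    also have "\<dots> = A *v v"
      by (subst (2) orthonormal_basis_expansion[OF B, of v])
        (simp add: matrix_vector_mult_sum_scaleR)
    finally show ?thesis .
  qed
  then have "S ** S = A" by (simp add: matrix_eq)
  ultimately show ?thesis by (rule that)
qed

lemma psd_sqrt_unique:
  fixes A :: "real^'n^'n"
  assumes A: "psd A" and S: "psd S" "S ** S = A" and S': "psd S'" "S' ** S' = A"
  shows "S = S'"
proof -
  obtain B where B: "orthonormal_basis B" and E: "eigenvectors A B"
    using symmetric_orthonormal_eigenbasis[OF psd_symmetric[OF A]] by blast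
  have root: "R *v b = sqrt (b \<bullet> (A *v b)) *\<^sub>R b" if "psd R" "R ** R = A" "b \<in> B" for R b
    using that E A
    by (intro psd_sqrt_on_eigenvector)
      (auto simp: matrix_vector_mul_assoc eigenvectors_def psd_nonneg)
  have "S *v v = S' *v v" for v
    by (subst (1 2) orthonormal_basis_expansion[OF B, of v])
      (simp add: matrix_vector_mult_sum_scaleR root S S')
  then show ?thesis by (simp add: matrix_eq)
qed

lemma msqrt_is_psd_sqrt:
  fixes A :: "real^'n^'n"
  assumes "psd A"
  shows psd_msqrt: "psd (msqrt A)" and msqrt_mult_self: "msqrt A ** msqrt A = A"
proof -
  have "\<exists>!S. psd S \<and> S ** S = A"
    using psd_sqrt_exists[OF assms] psd_sqrt_unique[OF assms] by metis
  then have "psd (msqrt A) \<and> msqrt A ** msqrt A = A"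
    unfolding msqrt_def by (rule theI')
  then show "psd (msqrt A)" "msqrt A ** msqrt A = A" by auto
qed

section \<open>Block matrices\<close>

definition vec_join :: "real^'a \<Rightarrow> real^'b \<Rightarrow> real^('a + 'b)" where
  "vec_join u w = (\<chi> i. case i of Inl r \<Rightarrow> u$r | Inr s \<Rightarrow> w$s)"

lemma sum_UNIV_Plus:
  "sum f (UNIV :: ('a::finite + 'b::finite) set) = (\<Sum>r\<in>UNIV. f (Inl r)) + (\<Sum>s\<in>UNIV. f (Inr s))"
  by (simp add: UNIV_Plus_UNIV[symmetric] sum.Plus del: UNIV_Plus_UNIV)

lemma blockmat_quadratic_form:
  fixes A :: "real^'a^'a" and B :: "real^'b^'a" and C :: "real^'a^'b" and D :: "real^'b^'b"
  shows "vec_join u w \<bullet> (blockmat A B C D *v vec_join u w) =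
    u \<bullet> (A *v u) + u \<bullet> (B *v w) + w \<bullet> (C *v u) + w \<bullet> (D *v w)"
  by (simp add: vec_join_def blockmat_def inner_vec_def matrix_vector_mult_def sum_UNIV_Plus
      sum_distrib_left distrib_left sum.distrib)

lemma psd_blockmat_nonneg:
  fixes A :: "real^'a^'a" and B :: "real^'b^'a" and C :: "real^'a^'b" and D :: "real^'b^'b"
  assumes "psd (blockmat A B C D)"
  shows "0 \<le> u \<bullet> (A *v u) + u \<bullet> (B *v w) + w \<bullet> (C *v u) + w \<bullet> (D *v w)"
  using psd_nonneg[OF assms, of "vec_join u w"] by (simp add: blockmat_quadratic_form)

lemma psd_blockmat_upper_left:
  fixes A :: "real^'a^'a" and B :: "real^'b^'a" and C :: "real^'a^'b" and D :: "real^'b^'b"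
  assumes "psd (blockmat A B C D)"
  shows "psd A"
proof -
  have "transpose (blockmat A B C D) $ Inl r $ Inl s = blockmat A B C D $ Inl r $ Inl s" for r s
    using psd_symmetric[OF assms] by simp
  then have "transpose A = A" by (simp add: blockmat_def transpose_def vec_eq_iff)
  moreover have "0 \<le> u \<bullet> (A *v u)" for u
    using psd_nonneg[OF assms, of "vec_join u 0"] by (simp add: blockmat_quadratic_form)
  ultimately show ?thesis by (simp add: psd_def)
qed

lemma psd_blockmat_cross_term_le:
  fixes M S Qm :: "real^'n^'n"
  assumes S: "transpose S = S" and blk: "psd (blockmat M (\<gamma> *\<^sub>R S) (\<gamma> *\<^sub>R S) Qm)"
  shows "2 * \<gamma> * (v \<bullet> (S *v w)) \<le> v \<bullet> (M *v v) + w \<bullet> (Qm *v w)"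
proof -
  have "w \<bullet> (S *v v) = v \<bullet> (S *v w)"
    using inner_matrix_symmetric[OF S, of w v] by (simp add: inner_commute)
  then show ?thesis
    using psd_blockmat_nonneg[OF blk, of v "- w"]
    by (simp add: scaleR_matrix_vector_assoc[symmetric] linear_neg[OF matrix_vector_mul_linear])
qed

definition scalv :: "real \<Rightarrow> real^unit" where
  "scalv t = (\<chi> i. t)"

lemma colm_mult_scalv: "colm c *v scalv t = t *\<^sub>R c"
  by (simp add: colm_def scalv_def matrix_vector_mult_def vec_eq_iff UNIV_unit)

lemma inner_scalv_rowm: "scalv t \<bullet> (rowm c *v u) = t * (c \<bullet> u)"
  by (simp add: rowm_def scalv_def matrix_vector_mult_def inner_vec_def UNIV_unit)

lemma inner_scalv_scalm: "scalv t \<bullet> (scalm s *v scalv t) = s * t\<^sup>2"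
  by (simp add: scalm_def scalv_def matrix_vector_mult_def inner_vec_def UNIV_unit power2_eq_square)

lemma scalm_0 [simp]: "scalm 0 = 0"
  by (simp add: scalm_def vec_eq_iff)

lemma bordered_quadratic_form:
  "vec_join u (scalv t) \<bullet> (blockmat A (colm c) (rowm c) (scalm s) *v vec_join u (scalv t)) =
    u \<bullet> (A *v u) + 2 * t * (c \<bullet> u) + s * t\<^sup>2"
  by (simp add: blockmat_quadratic_form colm_mult_scalv inner_scalv_rowm inner_scalv_scalm
      inner_commute)

section \<open>A trace inequality for positive semidefinite block matrices\<close>

lemma bessel_inequality_psd:
  fixes \<Sigma> :: "real^'n^'n" and u :: "'i \<Rightarrow> real^'n"
  assumes \<Sigma>: "psd \<Sigma>" and F: "finite F"
    and orth: "\<And>b b'. b \<in> F \<Longrightarrow> b' \<in> F \<Longrightarrow> u b \<bullet> (\<Sigma> *v u b') = (if b = b' then 1 else 0)"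
  shows "(\<Sum>b\<in>F. (u b \<bullet> (\<Sigma> *v c))\<^sup>2) \<le> c \<bullet> (\<Sigma> *v c)"
proof -
  define \<alpha> where "\<alpha> b = u b \<bullet> (\<Sigma> *v c)" for b
  define y where "y = (\<Sum>b\<in>F. \<alpha> b *\<^sub>R u b)"
  have uy: "u b \<bullet> (\<Sigma> *v y) = \<alpha> b" if "b \<in> F" for b
  proof -
    have "u b \<bullet> (\<Sigma> *v y) = (\<Sum>b'\<in>F. \<alpha> b' * (if b = b' then 1 else 0))"
      using orth[OF that] by (simp add: y_def matrix_vector_mult_sum_scaleR inner_sum_right)
    also have "\<dots> = \<alpha> b" using F that by (simp add: if_distrib cong: if_cong)
    finally show ?thesis .
  qed
  have yc: "y \<bullet> (\<Sigma> *v c) = (\<Sum>b\<in>F. (\<alpha> b)\<^sup>2)"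
    by (simp add: y_def inner_sum_left \<alpha>_def power2_eq_square)
  have "y \<bullet> w = (\<Sum>b\<in>F. \<alpha> b * (u b \<bullet> w))" for w
    by (simp add: y_def inner_sum_left)
  then have yy: "y \<bullet> (\<Sigma> *v y) = (\<Sum>b\<in>F. (\<alpha> b)\<^sup>2)"
    by (simp add: uy power2_eq_square)
  have cy: "c \<bullet> (\<Sigma> *v y) = y \<bullet> (\<Sigma> *v c)"
    using inner_matrix_symmetric[OF psd_symmetric[OF \<Sigma>], of c y] by (simp add: inner_commute)
  have "0 \<le> (c - y) \<bullet> (\<Sigma> *v (c - y))" using \<Sigma> by (rule psd_nonneg)
  also have "\<dots> = c \<bullet> (\<Sigma> *v c) - c \<bullet> (\<Sigma> *v y) - y \<bullet> (\<Sigma> *v c) + y \<bullet> (\<Sigma> *v y)"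
    by (simp add: matrix_vector_mult_diff_distrib inner_diff_left inner_diff_right)
  finally show ?thesis using cy yc yy by (simp add: \<alpha>_def)
qed

lemma sum_quadratic_form_le_trace:
  fixes M \<Sigma> :: "real^'n^'n" and u :: "'i \<Rightarrow> real^'n"
  assumes M: "psd M" and \<Sigma>: "psd \<Sigma>" and F: "finite F"
    and orth: "\<And>b b'. b \<in> F \<Longrightarrow> b' \<in> F \<Longrightarrow> u b \<bullet> (\<Sigma> *v u b') = (if b = b' then 1 else 0)"
  shows "(\<Sum>b\<in>F. (\<Sigma> *v u b) \<bullet> (M *v (\<Sigma> *v u b))) \<le> trace (M ** \<Sigma>)"
proof -
  obtain B where B: "orthonormal_basis B" and E: "eigenvectors M B"
    using symmetric_orthonormal_eigenbasis[OF psd_symmetric[OF M]] by blast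
  have "c \<bullet> (\<Sigma> *v u b) = u b \<bullet> (\<Sigma> *v c)" for b c
    using inner_matrix_symmetric[OF psd_symmetric[OF \<Sigma>], of c "u b"] by (simp add: inner_commute)
  then have "(\<Sum>b\<in>F. (\<Sigma> *v u b) \<bullet> (M *v (\<Sigma> *v u b)))
      = (\<Sum>b\<in>F. \<Sum>c\<in>B. (c \<bullet> (M *v c)) * (u b \<bullet> (\<Sigma> *v c))\<^sup>2)"
    by (intro sum.cong refl) (subst eigenbasis_quadratic_form[OF B E], simp)
  also have "\<dots> = (\<Sum>c\<in>B. (c \<bullet> (M *v c)) * (\<Sum>b\<in>F. (u b \<bullet> (\<Sigma> *v c))\<^sup>2))"
    unfolding sum_distrib_left by (rule sum.swap)
  also have "\<dots> \<le> (\<Sum>c\<in>B. (c \<bullet> (M *v c)) * (c \<bullet> (\<Sigma> *v c)))"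
    by (intro sum_mono mult_left_mono bessel_inequality_psd[OF \<Sigma> F orth] psd_nonneg[OF M])
  also have "\<dots> = trace (M ** \<Sigma>)"
    by (simp add: eigenbasis_trace_mult[OF B E psd_symmetric[OF M]])
  finally show ?thesis .
qed

lemma congruence_on_sqrt_eigenvectors:
  fixes S \<Sigma> T :: "real^'n^'n"
  assumes S: "transpose S = S" and T: "T ** T = S ** \<Sigma> ** S"
    and B: "orthonormal B" "eigenvectors T B" and b: "b \<in> B" "b' \<in> B"
  shows "(S *v b) \<bullet> (\<Sigma> *v (S *v b')) = (if b = b' then (b \<bullet> (T *v b))\<^sup>2 else 0)"
proof -
  define l where "l = b' \<bullet> (T *v b')"
  have "T *v b' = l *\<^sub>R b'" using B(2) b(2) by (simp add: eigenvectors_def l_def)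
  then have "T *v (T *v b') = l\<^sup>2 *\<^sub>R b'" by (simp add: matrix_vector_mult_scaleR power2_eq_square)
  moreover have "(S *v b) \<bullet> (\<Sigma> *v (S *v b')) = b \<bullet> (T *v (T *v b'))"
    using inner_matrix_symmetric[OF S, of b "\<Sigma> *v (S *v b')"]
    by (simp add: matrix_vector_mul_assoc T matrix_mul_assoc)
  ultimately show ?thesis using orthonormal_inner[OF B(1) b] by (simp add: l_def)
qed

text \<open>For an orthonormal eigenbasis \<open>b\<close> of \<open>T\<close> with eigenvalues \<open>t b > 0\<close>, the vectors
  \<open>S b / t b\<close> are orthonormal for the inner product of \<open>\<Sigma>\<close>; testing the block matrix with
  \<open>(\<Sigma> S b / t b, -b)\<close> and summing with Bessel's inequality gives the bound.\<close>
lemma psd_blockmat_trace_bound: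
  fixes M \<Sigma> S Qm :: "real^'n^'n"
  assumes \<Sigma>: "psd \<Sigma>" and S: "transpose S = S"
    and blk: "psd (blockmat M (\<gamma> *\<^sub>R S) (\<gamma> *\<^sub>R S) Qm)"
  shows "2 * \<gamma> * trace (msqrt (S ** \<Sigma> ** S)) \<le> trace (M ** \<Sigma>) + trace Qm"
proof -
  define T where "T = msqrt (S ** \<Sigma> ** S)"
  have T: "psd T" "T ** T = S ** \<Sigma> ** S"
    using msqrt_is_psd_sqrt[OF psd_congruence[OF \<Sigma> S]] by (simp_all add: T_def)
  obtain B where B: "orthonormal_basis B" and E: "eigenvectors T B"
    using symmetric_orthonormal_eigenbasis[OF psd_symmetric[OF T(1)]] by blast
  have ON: "orthonormal B" using B by (simp add: orthonormal_basis_def)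
  define t where "t b = b \<bullet> (T *v b)" for b
  define F where "F = {b \<in> B. t b > 0}"
  define u where "u b = (1 / t b) *\<^sub>R (S *v b)" for b
  have congr: "(S *v b) \<bullet> (\<Sigma> *v (S *v b')) = (if b = b' then (t b)\<^sup>2 else 0)"
    if "b \<in> B" "b' \<in> B" for b b'
    using congruence_on_sqrt_eigenvectors[OF S T(2) ON E that] by (simp add: t_def)
  have orth: "u b \<bullet> (\<Sigma> *v u b') = (if b = b' then 1 else 0)" if "b \<in> F" "b' \<in> F" for b b'
    using that congr[of b b'] by (auto simp: F_def u_def matrix_vector_mult_scaleR power2_eq_square)
  have per_eigenvector:
    "2 * \<gamma> * t b \<le> (if b \<in> F then (\<Sigma> *v u b) \<bullet> (M *v (\<Sigma> *v u b)) else 0) + b \<bullet> (Qm *v b)"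
    if "b \<in> B" for b
  proof (cases "b \<in> F")
    case True
    have "(\<Sigma> *v u b) \<bullet> (S *v b) = t b"
      using True congr[OF that that] inner_matrix_symmetric[OF psd_symmetric[OF \<Sigma>], of "S *v b" "u b"]
      by (simp add: F_def u_def inner_commute power2_eq_square)
    then show ?thesis using True psd_blockmat_cross_term_le[OF S blk, of "\<Sigma> *v u b" b] by simp
  next
    case False
    then have "t b = 0" using that psd_nonneg[OF T(1), of b] by (auto simp: F_def t_def)
    then show ?thesis using False psd_blockmat_cross_term_le[OF S blk, of 0 b] by simp
  qed
  have "2 * \<gamma> * trace T = (\<Sum>b\<in>B. 2 * \<gamma> * t b)"
    by (simp add: orthonormal_basis_trace[OF B] t_def sum_distrib_left)
  also have "\<dots> \<le> (\<Sum>b\<in>B. if b \<in> F then (\<Sigma> *v u b) \<bullet> (M *v (\<Sigma> *v u b)) else 0) + trace Qm"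
    using per_eigenvector
    by (simp add: orthonormal_basis_trace[OF B, of Qm] sum_mono flip: sum.distrib)
  also have "(\<Sum>b\<in>B. if b \<in> F then (\<Sigma> *v u b) \<bullet> (M *v (\<Sigma> *v u b)) else 0)
      = (\<Sum>b\<in>F. (\<Sigma> *v u b) \<bullet> (M *v (\<Sigma> *v u b)))"
    using ON by (simp add: F_def orthonormal_def sum.inter_filter)
  also have "\<dots> \<le> trace (M ** \<Sigma>)"
    using ON by (intro sum_quadratic_form_le_trace[OF psd_blockmat_upper_left[OF blk] \<Sigma> _ orth])
      (simp_all add: F_def orthonormal_def)
  finally show ?thesis by (simp add: T_def)
qed

section \<open>Consequences of the semidefinite constraints\<close>

lemma sdp_feasible_quadratic_nonneg:
  assumes "sdp_feasible J x \<mu>h \<Sigma>h \<gamma> z0 z Z q Qm lam"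
  shows "0 \<le> \<theta> \<bullet> (Z *v \<theta>) + 2 * (z \<bullet> \<theta>) + z0"
proof -
  have "psd (blockmat Z (colm z) (rowm z) (scalm z0))"
    using assms by (simp add: sdp_feasible_def)
  from psd_nonneg[OF this, of "vec_join \<theta> (scalv 1)"] show ?thesis
    by (simp add: bordered_quadratic_form)
qed

text \<open>The last constraint is an S-lemma certificate: on \<open>Theta J x\<close> the multipliers \<open>lam j\<close>
  only add nonnegative terms.\<close>
lemma sdp_feasible_quadratic_ge_1_on_Theta:
  fixes x :: "nat \<Rightarrow> real^'n"
  assumes F: "sdp_feasible J x \<mu>h \<Sigma>h \<gamma> z0 z Z q Qm lam" and \<theta>: "\<theta> \<in> Theta J x"
  shows "1 \<le> \<theta> \<bullet> (Z *v \<theta>) + 2 * (z \<bullet> \<theta>) + z0"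
proof -
  define N where "N = (\<Sum>j\<in>{1..J}. lam j *\<^sub>R
    blockmat (0::real^'n^'n) (colm ((1/2) *\<^sub>R x j)) (rowm ((1/2) *\<^sub>R x j)) (0::real^unit^unit))"
  define v where "v = vec_join \<theta> (scalv 1)"
  have "0 \<le> v \<bullet> ((blockmat Z (colm z) (rowm z) (scalm (z0 - 1)) - N) *v v)"
    using F by (intro psd_nonneg) (simp add: sdp_feasible_def loewner_ge_def N_def)
  moreover have "v \<bullet> (blockmat Z (colm z) (rowm z) (scalm (z0 - 1)) *v v)
      = \<theta> \<bullet> (Z *v \<theta>) + 2 * (z \<bullet> \<theta>) + z0 - 1"
    by (simp add: v_def bordered_quadratic_form)
  moreover have "v \<bullet> (N *v v) = (\<Sum>j\<in>{1..J}. lam j * (x j \<bullet> \<theta>))"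
    using bordered_quadratic_form[of \<theta> 1 "0::real^'n^'n" "(1/2) *\<^sub>R x _" 0]
    by (simp add: v_def N_def matrix_sum_vector_mult inner_sum_right
        scaleR_matrix_vector_assoc[symmetric])
  moreover have "0 \<le> (\<Sum>j\<in>{1..J}. lam j * (x j \<bullet> \<theta>))"
    using F \<theta> by (intro sum_nonneg) (auto simp: sdp_feasible_def Theta_def)
  ultimately show ?thesis by (simp add: matrix_vector_mult_diff_rdistrib inner_diff_right)
qed

lemma sdp_feasible_mean_bound:
  assumes "sdp_feasible J x \<mu>h \<Sigma>h \<gamma> z0 z Z q Qm lam"
  shows "\<mu> \<bullet> (Z *v \<mu>) + 2 * (z \<bullet> \<mu>) \<le> \<gamma> * (\<mu> \<bullet> \<mu> - 2 * (\<mu> \<bullet> \<mu>h)) + q"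
proof -
  have "psd (blockmat (\<gamma> *\<^sub>R mat 1 - Z) (colm (\<gamma> *\<^sub>R \<mu>h + z)) (rowm (\<gamma> *\<^sub>R \<mu>h + z)) (scalm q))"
    using assms by (simp add: sdp_feasible_def)
  from psd_nonneg[OF this, of "vec_join \<mu> (scalv (-1))"] show ?thesis
    by (simp add: bordered_quadratic_form matrix_vector_mult_diff_rdistrib
        scaleR_matrix_vector_assoc[symmetric] inner_diff_right inner_add_left inner_commute
        algebra_simps)
qed

lemma sdp_feasible_trace_bound:
  fixes \<Sigma> :: "real^'n^'n"
  assumes \<Sigma>h: "psd \<Sigma>h" and \<Sigma>: "psd \<Sigma>" and F: "sdp_feasible J x \<mu>h \<Sigma>h \<gamma> z0 z Z q Qm lam"
  shows "2 * \<gamma> * trace (msqrt (msqrt \<Sigma>h ** \<Sigma> ** msqrt \<Sigma>h))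
    \<le> \<gamma> * trace \<Sigma> - trace (Z ** \<Sigma>) + trace Qm"
proof -
  have "(\<gamma> *\<^sub>R mat 1 - Z) ** \<Sigma> = \<gamma> *\<^sub>R \<Sigma> - Z ** \<Sigma>"
    by (simp add: matrix_eq matrix_vector_mul_assoc[symmetric] matrix_vector_mult_diff_rdistrib
        scaleR_matrix_vector_assoc[symmetric])
  then have "trace ((\<gamma> *\<^sub>R mat 1 - Z) ** \<Sigma>) = \<gamma> * trace \<Sigma> - trace (Z ** \<Sigma>)"
    by (simp add: trace_sub trace_def sum_distrib_left sum_subtractf)
  moreover have "2 * \<gamma> * trace (msqrt (msqrt \<Sigma>h ** \<Sigma> ** msqrt \<Sigma>h))
      \<le> trace ((\<gamma> *\<^sub>R mat 1 - Z) ** \<Sigma>) + trace Qm"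
    using F by (intro psd_blockmat_trace_bound[OF \<Sigma> psd_symmetric[OF psd_msqrt[OF \<Sigma>h]]])
      (simp add: sdp_feasible_def)
  ultimately show ?thesis by simp
qed

section \<open>Weak duality\<close>

lemma has_mean_cov_symmetric:
  assumes "has_mean_cov Q \<mu> \<Sigma>"
  shows "transpose \<Sigma> = \<Sigma>"
proof -
  have cov: "(\<integral>\<theta>. (\<theta>$i - \<mu>$i) * (\<theta>$k - \<mu>$k) \<partial>Q) = \<Sigma>$i$k" for i k
    using assms by (simp add: has_mean_cov_def)
  have "\<Sigma>$i$k = \<Sigma>$k$i" for i k
    using cov[of i k] cov[of k i] by (simp add: mult.commute)
  then show ?thesis by (simp add: transpose_def vec_eq_iff)
qed

lemma has_mean_cov_second_moment:
  assumes "prob_space Q" and H: "has_mean_cov Q \<mu> \<Sigma>"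
  shows "(\<integral>\<theta>. \<theta>$i * \<theta>$k \<partial>Q) = \<Sigma>$i$k + \<mu>$i * \<mu>$k"
proof -
  interpret prob_space Q by fact
  have I: "integrable Q (\<lambda>\<theta>. \<theta>$i)" "integrable Q (\<lambda>\<theta>. \<theta>$k)" "integrable Q (\<lambda>\<theta>. \<theta>$i * \<theta>$k)"
    and E: "(\<integral>\<theta>. \<theta>$i \<partial>Q) = \<mu>$i" "(\<integral>\<theta>. \<theta>$k \<partial>Q) = \<mu>$k"
    using H by (auto simp: has_mean_cov_def)
  have "\<Sigma>$i$k = (\<integral>\<theta>. \<theta>$i * \<theta>$k - \<mu>$k * \<theta>$i - \<mu>$i * \<theta>$k + \<mu>$i * \<mu>$k \<partial>Q)"
    using H by (simp add: has_mean_cov_def algebra_simps)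
  also have "\<dots> = (\<integral>\<theta>. \<theta>$i * \<theta>$k \<partial>Q) - \<mu>$i * \<mu>$k"
    using I E by (simp add: prob_space)
  finally show ?thesis by simp
qed

lemma has_mean_cov_quadratic_expectation:
  fixes Z :: "real^'n^'n" and z :: "real^'n" and c :: real
  assumes P: "prob_space Q" and H: "has_mean_cov Q \<mu> \<Sigma>"
  defines "f \<equiv> \<lambda>\<theta>. \<theta> \<bullet> (Z *v \<theta>) + 2 * (z \<bullet> \<theta>) + c"
  shows "integrable Q f"
    and "(\<integral>\<theta>. f \<theta> \<partial>Q) = trace (Z ** \<Sigma>) + \<mu> \<bullet> (Z *v \<mu>) + 2 * (z \<bullet> \<mu>) + c"
proof -
  interpret prob_space Q by (rule P)
  have f: "f = (\<lambda>\<theta>. (\<Sum>i\<in>UNIV. \<Sum>k\<in>UNIV. Z$i$k * (\<theta>$i * \<theta>$k)) + (\<Sum>i\<in>UNIV. 2 * z$i * \<theta>$i) + c)"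
    by (simp add: f_def fun_eq_iff inner_vec_def matrix_vector_mult_def sum_distrib_left ac_simps)
  have I1: "integrable Q (\<lambda>\<theta>. \<theta>$i)" and I2: "integrable Q (\<lambda>\<theta>. \<theta>$i * \<theta>$k)"
    and E1: "(\<integral>\<theta>. \<theta>$i \<partial>Q) = \<mu>$i" for i k
    using H by (auto simp: has_mean_cov_def)
  show "integrable Q f"
    unfolding f using I1 I2 by (auto intro!: integrable_add integrable_sum integrable_mult_right)
  have "(\<integral>\<theta>. f \<theta> \<partial>Q)
      = (\<Sum>i\<in>UNIV. \<Sum>k\<in>UNIV. Z$i$k * (\<Sigma>$i$k + \<mu>$i * \<mu>$k)) + (\<Sum>i\<in>UNIV. 2 * z$i * \<mu>$i) + c"
    unfolding f using I1 I2
    by (simp add: integral_add integral_sum integrable_sum E1 prob_space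
        has_mean_cov_second_moment[OF P H] mult.assoc)
  also have "\<dots> = trace (Z ** \<Sigma>) + \<mu> \<bullet> (Z *v \<mu>) + 2 * (z \<bullet> \<mu>) + c"
    using has_mean_cov_symmetric[OF H]
    by (simp add: trace_def matrix_matrix_mult_def inner_vec_def matrix_vector_mult_def
        transpose_def vec_eq_iff sum_distrib_left distrib_left sum.distrib ac_simps)
  finally show "(\<integral>\<theta>. f \<theta> \<partial>Q) = trace (Z ** \<Sigma>) + \<mu> \<bullet> (Z *v \<mu>) + 2 * (z \<bullet> \<mu>) + c" .
qed

lemma gelbrich_le_imp_sq_le:
  assumes "gelbrich \<mu> \<Sigma> \<mu>h \<Sigma>h \<le> \<rho>"
  shows "\<mu> \<bullet> \<mu> - 2 * (\<mu> \<bullet> \<mu>h) + \<mu>h \<bullet> \<mu>h + trace \<Sigma> + trace \<Sigma>h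
           - 2 * trace (msqrt (msqrt \<Sigma>h ** \<Sigma> ** msqrt \<Sigma>h)) \<le> \<rho>\<^sup>2"
  using sqrt_le_D[OF assms[unfolded gelbrich_def]]
  by (simp add: power2_norm_eq_inner inner_diff_left inner_diff_right inner_commute
      trace_add trace_sub trace_scaleR)

lemma gelbrich_ball_measure_Theta_le_sdp_objective:
  assumes \<Sigma>h: "psd \<Sigma>h" and Q: "Q \<in> gelbrich_ball \<rho> \<mu>h \<Sigma>h"
    and F: "sdp_feasible J x \<mu>h \<Sigma>h \<gamma> z0 z Z q Qm lam"
  shows "measure Q (Theta J x) \<le> sdp_objective \<rho> \<mu>h \<Sigma>h \<gamma> z0 q Qm"
proof -
  obtain \<mu> \<Sigma> where P: "prob_space Q" and sets: "sets Q = sets borel" and \<Sigma>: "psd \<Sigma>"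
    and G: "gelbrich \<mu> \<Sigma> \<mu>h \<Sigma>h \<le> \<rho>" and H: "has_mean_cov Q \<mu> \<Sigma>"
    using Q by (auto simp: gelbrich_ball_def)
  have "space Q = UNIV" using sets_eq_imp_space_eq[OF sets] by simp
  then have "measure Q (Theta J x) = (\<integral>\<theta>. indicator (Theta J x) \<theta> \<partial>Q)" by simp
  also have "\<dots> \<le> (\<integral>\<theta>. \<theta> \<bullet> (Z *v \<theta>) + 2 * (z \<bullet> \<theta>) + z0 \<partial>Q)"
    using has_mean_cov_quadratic_expectation(1)[OF P H] sdp_feasible_quadratic_nonneg[OF F]
      sdp_feasible_quadratic_ge_1_on_Theta[OF F]
    by (intro integral_mono') (auto simp: indicator_def)
  also have "\<dots> = trace (Z ** \<Sigma>) + \<mu> \<bullet> (Z *v \<mu>) + 2 * (z \<bullet> \<mu>) + z0"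
    by (rule has_mean_cov_quadratic_expectation(2)[OF P H])
  also have "\<dots> \<le> sdp_objective \<rho> \<mu>h \<Sigma>h \<gamma> z0 q Qm"
  proof -
    have "\<gamma> \<ge> 0" using F by (simp add: sdp_feasible_def)
    with gelbrich_le_imp_sq_le[OF G]
    have "\<gamma> * (\<mu> \<bullet> \<mu> - 2 * (\<mu> \<bullet> \<mu>h) + \<mu>h \<bullet> \<mu>h + trace \<Sigma> + trace \<Sigma>h
        - 2 * trace (msqrt (msqrt \<Sigma>h ** \<Sigma> ** msqrt \<Sigma>h))) \<le> \<gamma> * \<rho>\<^sup>2"
      by (rule mult_left_mono)
    then show ?thesis
      using sdp_feasible_mean_bound[OF F, of \<mu>] sdp_feasible_trace_bound[OF \<Sigma>h \<Sigma> F]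
      by (simp add: sdp_objective_def power2_norm_eq_inner algebra_simps)
  qed
  finally show ?thesis .
qed

theorem theorem2:
  fixes J :: nat and x :: "nat \<Rightarrow> real^'n" and \<rho> :: real
    and \<mu>h :: "real^'n" and \<Sigma>h :: "real^'n^'n"
  assumes "\<rho> \<ge> 0" and "psd \<Sigma>h"
  shows "(SUP Q \<in> gelbrich_ball \<rho> \<mu>h \<Sigma>h. ereal (measure Q (Theta J x)))
           \<le> U_star J x \<rho> \<mu>h \<Sigma>h"
  unfolding U_star_def
  using gelbrich_ball_measure_Theta_le_sdp_objective[OF assms(2)]
  by (auto intro!: SUP_least INF_greatest)

end
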